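(* The generating function of the Stern polynomials satisfies $$\sum_{n=0}^{\infty}B_n(t)x^{n}=x\prod_{k=0}^{\infty}\bigl(1+tx^{2^{k}}+x^{2^{k+1}}\bigr)$$ as formal power series in $x$ with coefficients in $\mathbb{Z}[t]$; moreover, for every real $t$ and every real $x$ with $|x|<1$, both the series and the infinite product converge and are equal.
   Context: The Stern polynomials $B_n(t)\in\mathbb{Z}[t]$, $n\ge 0$, are defined by $B_0(t)=0$, $B_1(t)=1$, $B_{2n}(t)=tB_n(t)$ and $B_{2n+1}(t)=B_n(t)+B_{n+1}(t)$ for $n\ge 1$. *)

theory Defs
  imports "HOL-Analysis.Analysis" "HOL-Computational_Algebra.Computational_Algebra"
begin

function stern_poly :: "nat \<Rightarrow> int poly" where
  "stern_poly n =
     (if n = 0 then 0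
      else if n = 1 then 1
      else if even n then [:0, 1:] * stern_poly (n div 2)
      else stern_poly (n div 2) + stern_poly (n div 2 + 1))"
  by auto
termination
  by (relation "Wellfounded.measure id") (auto elim!: oddE)

end

theory Submission
  imports Defs "HOL-Real_Asymp.Real_Asymp"
begin

(* The Stern polynomials satisfy B(2n) = t B(n) and B(2n+1) = B(n) + B(n+1) for ALL n
   (the cases n = 0 hold because B(0) = 0), and these two rules say exactly that
   the shifted generating series R(x) = sum_n B(n+1) x^n obeys the functional equation
     R(x) = (1 + t x + x^2) R(x^2).
   Writing P_k(x) = 1 + t x^(2^k) + x^(2^(k+1)), iteration gives
     R(x) = (P_0 ... P_(N-1))(x) R(x^(2^N)).
   Formally (over Z[t]) this shows that R and the partial product P_0 ... P_(N-1) agree in all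
   coefficients below 2^N, so the partial products converge to R in the X-adic topology.
   Analytically (t, x real, |x| < 1) the coefficients grow at most polynomially, so R(x)
   converges; R is continuous at 0 with R(0) = 1, so R(x^(2^N)) tends to 1 and the partial
   products tend to R(x).  Multiplying by x yields the generating function of the B(n). *)

text \<open>The defining equation unfolds without bound on symbolic arguments; we use the
  recurrences below instead.\<close>
declare stern_poly.simps [simp del]

lemma stern_poly_0 [simp]: "stern_poly 0 = 0"
  by (subst stern_poly.simps) simp

lemma stern_poly_1 [simp]: "stern_poly (Suc 0) = 1"
  by (subst stern_poly.simps) simp

lemma stern_poly_double: "stern_poly (2 * n) = [:0, 1:] * stern_poly n"
  by (subst stern_poly.simps) auto

lemma stern_poly_double_Suc: "stern_poly (2 * n + 1) = stern_poly n + stern_poly (n + 1)"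
proof (cases "n = 0")
  case False
  then show ?thesis by (subst stern_poly.simps) simp
qed simp

section \<open>The formal identity over \<open>\<int>[t]\<close>\<close>

lemma fps_compose_X_squared_nth:
  fixes f :: "'a::comm_ring_1 fps"
  shows "(f oo fps_X ^ 2) $ n = (if even n then f $ (n div 2) else 0)"
proof -
  have "(f oo fps_X ^ 2) $ n = (\<Sum>i=0..n. f $ i * (if n = 2 * i then 1 else 0))"
    by (simp add: fps_compose_nth flip: power_mult)
  also have "\<dots> = (\<Sum>i=0..n. if n = 2 * i then f $ i else 0)"
    by (simp add: if_distrib cong: if_cong)
  also have "\<dots> = (if even n then f $ (n div 2) else 0)"
    by (auto simp: sum.delta' elim!: evenE intro!: sum.neutral)
  finally show ?thesis .
qed

definition stern_factor :: "nat \<Rightarrow> int poly fps" where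
  "stern_factor k = 1 + fps_const [:0, 1:] * fps_X ^ (2 ^ k) + fps_X ^ (2 ^ (k + 1))"

lemma stern_factor_compose_X_squared: "stern_factor k oo fps_X ^ 2 = stern_factor (Suc k)"
proof -
  have X_power: "(fps_X ^ m :: int poly fps) oo fps_X ^ 2 = fps_X ^ (2 * m)" for m
    by (simp add: fps_X_power_compose power_mult)
  show ?thesis
    unfolding stern_factor_def
    by (simp add: fps_compose_add_distrib fps_compose_mult_distrib X_power fps_compose_1
                  mult.commute[of 2] power_Suc)
qed

lemma stern_partial_product_Suc:
  "(\<Prod>k<Suc N. stern_factor k) = stern_factor 0 * ((\<Prod>k<N. stern_factor k) oo fps_X ^ 2)"
proof -
  have "(fps_X ^ 2 :: int poly fps) $ 0 = 0" by simp
  then have "(\<Prod>k<N. stern_factor k) oo fps_X ^ 2 = (\<Prod>k<N. stern_factor (Suc k))"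
    by (simp add: fps_compose_prod_distrib stern_factor_compose_X_squared)
  then show ?thesis
    by (simp only: prod.lessThan_Suc_shift)
qed

definition stern_tail :: "int poly fps" where
  "stern_tail = Abs_fps (\<lambda>n. stern_poly (n + 1))"

lemma stern_factor_0_mult_nth:
  "(stern_factor 0 * S) $ n =
     S $ n + [:0, 1:] * (if n = 0 then 0 else S $ (n - 1)) + (if n < 2 then 0 else S $ (n - 2))"
  unfolding stern_factor_def by (simp add: distrib_right fps_X_power_mult_nth mult.assoc)

text \<open>The formal functional equation \<open>R(X) = (1 + t X + X\<^sup>2) R(X\<^sup>2)\<close>: comparing coefficients,
  it is the pair of Stern recurrences.\<close>
lemma stern_tail_functional_equation: "stern_tail = stern_factor 0 * (stern_tail oo fps_X ^ 2)"
proof (rule fps_ext)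
  fix n
  let ?S = "stern_tail oo fps_X ^ 2"
  show "stern_tail $ n = (stern_factor 0 * ?S) $ n"
  proof (cases "even n")
    case True
    then obtain m where n: "n = 2 * m" by blast
    have "stern_tail $ n = stern_poly (m + 1) + stern_poly m"
      using n stern_poly_double_Suc[of m] by (simp add: stern_tail_def)
    moreover have "?S $ n = stern_poly (m + 1)"
      using n by (simp add: fps_compose_X_squared_nth stern_tail_def)
    moreover have "n \<noteq> 0 \<Longrightarrow> ?S $ (n - 1) = 0"
      using n by (simp add: fps_compose_X_squared_nth)
    moreover have "(if n < 2 then 0 else ?S $ (n - 2)) = stern_poly m"
      using n by (cases m) (simp_all add: fps_compose_X_squared_nth stern_tail_def)
    ultimately show ?thesis
      by (simp add: stern_factor_0_mult_nth)
  next
    case False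
    then obtain m where n: "n = 2 * m + 1" by (blast elim: oddE)
    have "stern_tail $ n = [:0, 1:] * stern_poly (m + 1)"
      using n stern_poly_double[of "m + 1"] by (simp add: stern_tail_def)
    moreover have "?S $ n = 0" "?S $ (n - 1) = stern_poly (m + 1)"
      using n by (simp_all add: fps_compose_X_squared_nth stern_tail_def)
    moreover have "\<not> n < 2 \<Longrightarrow> ?S $ (n - 2) = 0"
      using n by (simp add: fps_compose_X_squared_nth)
    ultimately show ?thesis
      using n by (simp add: stern_factor_0_mult_nth)
  qed
qed

lemma stern_tail_agrees_with_partial_product:
  "i < 2 ^ N \<Longrightarrow> stern_tail $ i = (\<Prod>k<N. stern_factor k) $ i"
proof (induction N arbitrary: i)
  case 0
  then show ?case by (simp add: stern_tail_def)
next
  case (Suc N)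
  let ?D = "stern_tail - (\<Prod>k<N. stern_factor k)"
  have D_even: "(?D oo fps_X ^ 2) $ j = 0" if "j \<le> i" for j
    using Suc.IH[of "j div 2"] Suc.prems that by (auto simp: fps_compose_X_squared_nth)
  have "stern_tail - (\<Prod>k<Suc N. stern_factor k)
        = stern_factor 0 * (stern_tail oo fps_X ^ 2) - stern_factor 0 * ((\<Prod>k<N. stern_factor k) oo fps_X ^ 2)"
    by (subst (1) stern_tail_functional_equation) (simp only: stern_partial_product_Suc)
  also have "\<dots> = stern_factor 0 * (?D oo fps_X ^ 2)"
    by (simp add: fps_compose_sub_distrib right_diff_distrib)
  also have "\<dots> $ i = 0"
    unfolding fps_mult_nth by (intro sum.neutral) (simp add: D_even)
  finally show ?case by simp
qed

lemma stern_partial_products_tendsto: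
  "(\<lambda>N. fps_X * (\<Prod>k<N. stern_factor k)) \<longlonglongrightarrow> Abs_fps (\<lambda>n. stern_poly n)"
proof (rule tendsto_fpsI)
  fix n
  have "(fps_X * (\<Prod>k<N. stern_factor k)) $ n = stern_poly n" if "N \<ge> n" for N
  proof -
    have "n - 1 < 2 ^ N"
      using that less_exp[of N] by linarith
    then show ?thesis
      using stern_tail_agrees_with_partial_product[of "n - 1" N]
      by (cases n) (simp_all add: stern_tail_def)
  qed
  then show "\<forall>\<^sub>F N in sequentially. (fps_X * (\<Prod>k<N. stern_factor k)) $ n = Abs_fps stern_poly $ n"
    by (intro eventually_sequentiallyI[of n]) simp
qed

section \<open>The analytic identity for real \<open>t\<close> and \<open>|x| < 1\<close>\<close>

definition stern_eval :: "real \<Rightarrow> nat \<Rightarrow> real" where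
  "stern_eval t n = poly (map_poly of_int (stern_poly n)) t"

lemma stern_eval_0 [simp]: "stern_eval t 0 = 0"
  by (simp add: stern_eval_def)

lemma stern_eval_1 [simp]: "stern_eval t (Suc 0) = 1"
  by (simp add: stern_eval_def)

lemma stern_eval_double: "stern_eval t (2 * n) = t * stern_eval t n"
  by (simp add: stern_eval_def stern_poly_double map_poly_pCons)

lemma stern_eval_double_Suc: "stern_eval t (2 * n + 1) = stern_eval t n + stern_eval t (n + 1)"
proof -
  have "map_poly (of_int :: int \<Rightarrow> real) (p + q) = map_poly of_int p + map_poly of_int q" for p q
    by (intro poly_eqI) (simp add: coeff_map_poly)
  then show ?thesis
    unfolding stern_eval_def stern_poly_double_Suc by simp
qed

lemma power_add_ge_add_power:
  fixes a b :: "'a::linordered_semidom"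
  assumes "0 \<le> a" "0 \<le> b" "1 \<le> p"
  shows "a ^ p + b ^ p \<le> (a + b) ^ p"
  using assms(3)
proof (induction p rule: dec_induct)
  case (step p)
  have "a ^ Suc p + b ^ Suc p \<le> a ^ Suc p + b ^ Suc p + (a ^ p * b + b ^ p * a)"
    using assms by simp
  also have "\<dots> = (a ^ p + b ^ p) * (a + b)"
    by (simp add: algebra_simps)
  also have "\<dots> \<le> (a + b) ^ p * (a + b)"
    using step assms by (intro mult_right_mono) auto
  finally show ?case by (simp add: mult.commute)
qed simp

lemma stern_eval_bound:
  assumes "\<bar>t\<bar> \<le> 2 ^ p" "1 \<le> p"
  shows "\<bar>stern_eval t n\<bar> \<le> real n ^ p"
proof (induction n rule: less_induct)
  case (less n)
  consider "n = 0" | m where "n = 2 * m" "m \<ge> 1" | m where "n = 2 * m + 1"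
    by (metis evenE oddE less_one linorder_not_le mult_0_right)
  then show ?case
  proof cases
    case 1
    then show ?thesis by simp
  next
    case 2
    have "\<bar>stern_eval t n\<bar> = \<bar>t\<bar> * \<bar>stern_eval t m\<bar>"
      using 2 by (simp add: stern_eval_double abs_mult)
    also have "\<dots> \<le> 2 ^ p * real m ^ p"
      using less.IH[of m] 2 assms by (intro mult_mono) auto
    also have "\<dots> = real n ^ p"
      using 2 by (simp add: power_mult_distrib)
    finally show ?thesis .
  next
    case 3
    show ?thesis
    proof (cases "m = 0")
      case True
      then show ?thesis using 3 by simp
    next
      case False
      have "\<bar>stern_eval t n\<bar> \<le> \<bar>stern_eval t m\<bar> + \<bar>stern_eval t (m + 1)\<bar>"
        unfolding 3 stern_eval_double_Suc by (rule abs_triangle_ineq)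
      also have "\<dots> \<le> real m ^ p + real (m + 1) ^ p"
        using less.IH[of m] less.IH[of "m + 1"] 3 False by (intro add_mono) auto
      also have "\<dots> \<le> (real m + real (m + 1)) ^ p"
        using assms by (intro power_add_ge_add_power) auto
      also have "\<dots> = real n ^ p"
        using 3 by (simp add: add.commute)
      finally show ?thesis .
    qed
  qed
qed

lemma summable_power_times_geometric:
  fixes z :: real
  assumes "\<bar>z\<bar> < 1"
  shows "summable (\<lambda>n. real (Suc n) ^ p * z ^ n)"
proof (rule summable_in_conv_radius)
  have "(\<lambda>n. real (Suc n) / real (Suc (Suc n))) \<longlonglongrightarrow> 1"
    by real_asymp
  then have "(\<lambda>n. (real (Suc n) / real (Suc (Suc n))) ^ p) \<longlonglongrightarrow> 1"
    using tendsto_power by fastforce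
  then have "conv_radius (\<lambda>n. real (Suc n) ^ p) = 1"
    by (intro conv_radius_ratio_limit_nonzero) (auto simp: power_divide)
  then show "ereal (norm z) < conv_radius (\<lambda>n. real (Suc n) ^ p)"
    using assms by simp
qed

definition stern_tail_sum :: "real \<Rightarrow> real \<Rightarrow> real" where
  "stern_tail_sum t x = (\<Sum>n. stern_eval t (Suc n) * x ^ n)"

text \<open>For \<open>|x| < 1\<close> the series \<open>R(x)\<close> converges absolutely, by comparison with
  \<open>\<Sum>\<^sub>n (n + 1)\<^sup>p |x|\<^sup>n\<close> where \<open>|t| \<le> 2\<^sup>p\<close>.\<close>
lemma stern_tail_sums:
  assumes "\<bar>x\<bar> < 1"
  shows "(\<lambda>n. stern_eval t (Suc n) * x ^ n) sums stern_tail_sum t x"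
proof -
  obtain k :: nat where "\<bar>t\<bar> < 2 ^ k"
    using real_arch_pow[of 2 "\<bar>t\<bar>"] by auto
  moreover have "(2::real) ^ k \<le> 2 ^ Suc k"
    by simp
  ultimately have p: "\<bar>t\<bar> \<le> 2 ^ Suc k" "1 \<le> Suc k"
    by linarith+
  have bound: "norm (stern_eval t (Suc n) * x ^ n) \<le> real (Suc n) ^ Suc k * \<bar>x\<bar> ^ n" for n
    unfolding real_norm_def abs_mult power_abs
    by (intro mult_right_mono stern_eval_bound[OF p]) simp
  have "summable (\<lambda>n. real (Suc n) ^ Suc k * \<bar>x\<bar> ^ n)"
    using assms by (intro summable_power_times_geometric) simp
  then show ?thesis
    unfolding stern_tail_sum_def by (intro summable_sums summable_comparison_test'[OF _ bound])
qed

text \<open>Since \<open>B\<^sub>0 = 0\<close>, the full generating function is \<open>x R(x)\<close>.\<close>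
lemma stern_series_sums:
  assumes "\<bar>x\<bar> < 1"
  shows "(\<lambda>n. stern_eval t n * x ^ n) sums (x * stern_tail_sum t x)"
proof -
  have "(\<lambda>n. x * (stern_eval t (Suc n) * x ^ n)) sums (x * stern_tail_sum t x)"
    by (intro sums_mult stern_tail_sums assms)
  then have "(\<lambda>n. stern_eval t (Suc n) * x ^ Suc n) sums (x * stern_tail_sum t x)"
    by (simp add: mult_ac)
  then show ?thesis
    using sums_Suc_iff[of "\<lambda>n. stern_eval t n * x ^ n"] by simp
qed

lemma sums_even_odd:
  fixes f :: "nat \<Rightarrow> 'a::real_normed_vector"
  assumes "(\<lambda>m. f (2 * m)) sums a" "(\<lambda>m. f (2 * m + 1)) sums b"
  shows "f sums (a + b)"
proof -
  have "(\<lambda>n. if even n then f n else 0) sums a"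
    using assms(1) by (subst sums_mono_reindex[of "\<lambda>m. 2 * m", symmetric])
                      (auto simp: strict_mono_def)
  moreover have "(\<lambda>n. if odd n then f n else 0) sums b"
    using assms(2) by (subst sums_mono_reindex[of "\<lambda>m. 2 * m + 1", symmetric])
                      (auto simp: strict_mono_def elim!: oddE)
  ultimately have "(\<lambda>n. (if even n then f n else 0) + (if odd n then f n else 0)) sums (a + b)"
    by (rule sums_add)
  moreover have "(\<lambda>n. (if even n then f n else 0) + (if odd n then f n else 0)) = f"
    by (rule ext) simp
  ultimately show ?thesis by simp
qed

text \<open>The analytic functional equation \<open>R(x) = (1 + t x + x\<^sup>2) R(x\<^sup>2)\<close>: split \<open>R(x)\<close> into even and
  odd powers of \<open>x\<close> and apply the Stern recurrences.\<close>
lemma stern_tail_sum_functional_equation: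
  assumes x: "\<bar>x\<bar> < 1"
  shows "stern_tail_sum t x = (1 + t * x + x ^ 2) * stern_tail_sum t (x ^ 2)"
proof -
  define r where "r = stern_tail_sum t (x ^ 2)"
  have x2: "\<bar>x ^ 2\<bar> < 1"
    using x by (simp add: abs_square_less_1)
  have tail: "(\<lambda>m. stern_eval t (m + 1) * x ^ (2 * m)) sums r"
    using stern_tail_sums[OF x2, of t] by (simp add: r_def power_mult)
  have full: "(\<lambda>m. stern_eval t m * x ^ (2 * m)) sums (x ^ 2 * r)"
    using stern_series_sums[OF x2, of t] by (simp add: r_def power_mult)
  have "(\<lambda>m. stern_eval t (2 * m + 1) * x ^ (2 * m))
        = (\<lambda>m. stern_eval t m * x ^ (2 * m) + stern_eval t (m + 1) * x ^ (2 * m))"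
    by (simp only: stern_eval_double_Suc distrib_right)
  then have "(\<lambda>m. stern_eval t (2 * m + 1) * x ^ (2 * m)) sums (x ^ 2 * r + r)"
    using sums_add[OF full tail] by simp
  moreover have "(\<lambda>m. stern_eval t (2 * m + 1 + 1) * x ^ (2 * m + 1)) sums (t * x * r)"
  proof -
    have "(\<lambda>m. stern_eval t (2 * m + 1 + 1) * x ^ (2 * m + 1))
          = (\<lambda>m. t * x * (stern_eval t (m + 1) * x ^ (2 * m)))"
    proof (rule ext)
      fix m
      have "stern_eval t (2 * m + 1 + 1) = t * stern_eval t (m + 1)"
        using stern_eval_double[of t "m + 1"] by simp
      then show "stern_eval t (2 * m + 1 + 1) * x ^ (2 * m + 1) = t * x * (stern_eval t (m + 1) * x ^ (2 * m))"
        by (simp only: power_add power_one_right mult_ac)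
    qed
    then show ?thesis
      using sums_mult[OF tail, of "t * x"] by simp
  qed
  ultimately have "(\<lambda>n. stern_eval t (Suc n) * x ^ n) sums (x ^ 2 * r + r + t * x * r)"
    by (intro sums_even_odd[where f = "\<lambda>n. stern_eval t (Suc n) * x ^ n"]) simp_all
  then show ?thesis
    using sums_unique2[OF stern_tail_sums[OF x]] by (simp add: r_def algebra_simps)
qed

lemma stern_tail_sum_iterate:
  assumes x: "\<bar>x\<bar> < 1"
  shows "stern_tail_sum t x
           = (\<Prod>k<N. 1 + t * x ^ (2 ^ k) + x ^ (2 ^ (k + 1))) * stern_tail_sum t (x ^ (2 ^ N))"
proof (induction N)
  case (Suc N)
  have "\<bar>x ^ (2 ^ N)\<bar> < 1"
    using x by (simp add: power_abs power_less_one_iff)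
  then have "stern_tail_sum t (x ^ (2 ^ N))
               = (1 + t * x ^ (2 ^ N) + x ^ (2 ^ (N + 1))) * stern_tail_sum t (x ^ (2 ^ (N + 1)))"
    by (simp add: stern_tail_sum_functional_equation power_mult[symmetric] mult.commute)
  with Suc show ?case
    by (simp add: mult.assoc)
qed simp

text \<open>\<open>R\<close> is continuous at \<open>0\<close> with \<open>R(0) = B\<^sub>1 = 1\<close>, and \<open>x\<^bsup>2\<^sup>N\<^esup> \<rightarrow> 0\<close>; hence \<open>R(x\<^bsup>2\<^sup>N\<^esup>) \<rightarrow> 1\<close>.\<close>
lemma stern_tail_sum_at_iterated_squares:
  assumes x: "\<bar>x\<bar> < 1"
  shows "(\<lambda>N. stern_tail_sum t (x ^ (2 ^ N))) \<longlonglongrightarrow> 1"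
proof -
  have "summable (\<lambda>n. stern_eval t (Suc n) * (1 / 2) ^ n)"
    using stern_tail_sums[of "1 / 2" t] by (simp add: sums_iff)
  then have "isCont (stern_tail_sum t) 0"
    unfolding stern_tail_sum_def[abs_def] by (rule isCont_powser) simp
  moreover have "(\<lambda>N. x ^ (2 ^ N)) \<longlonglongrightarrow> 0"
  proof -
    have "(\<lambda>n. x ^ n) \<longlonglongrightarrow> 0"
      using x by (intro LIMSEQ_power_zero) simp
    moreover have "strict_mono (\<lambda>N. 2 ^ N :: nat)"
      by (auto simp: strict_mono_def)
    ultimately show ?thesis
      using LIMSEQ_subseq_LIMSEQ by (fastforce simp: o_def)
  qed
  ultimately have "(\<lambda>N. stern_tail_sum t (x ^ (2 ^ N))) \<longlonglongrightarrow> stern_tail_sum t 0"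
    by (rule isCont_tendsto_compose)
  moreover have "stern_tail_sum t 0 = 1"
    using powser_zero[of "\<lambda>n. stern_eval t (Suc n)"] by (simp add: stern_tail_sum_def)
  ultimately show ?thesis by simp
qed

text \<open>The infinite product converges (absolutely): \<open>|P\<^sub>k(x) - 1| \<le> (|t| + 1) |x|\<^sup>k\<close>.\<close>
lemma stern_product_convergent:
  fixes t x :: real
  assumes x: "\<bar>x\<bar> < 1"
  shows "convergent_prod (\<lambda>k. 1 + t * x ^ (2 ^ k) + x ^ (2 ^ (k + 1)))"
proof (intro abs_convergent_prod_imp_convergent_prod summable_imp_abs_convergent_prod)
  have bound: "\<bar>t * x ^ (2 ^ k) + x ^ (2 ^ (k + 1))\<bar> \<le> (\<bar>t\<bar> + 1) * \<bar>x\<bar> ^ k" for k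
  proof -
    have "\<bar>x\<bar> ^ (2 ^ k) \<le> \<bar>x\<bar> ^ k" "\<bar>x\<bar> ^ (2 ^ (k + 1)) \<le> \<bar>x\<bar> ^ k"
      using x less_exp[of k] less_exp[of "k + 1"] by (auto intro!: power_decreasing)
    then have "\<bar>t\<bar> * \<bar>x\<bar> ^ (2 ^ k) + \<bar>x\<bar> ^ (2 ^ (k + 1)) \<le> \<bar>t\<bar> * \<bar>x\<bar> ^ k + \<bar>x\<bar> ^ k"
      by (intro add_mono mult_left_mono) auto
    moreover have "\<bar>t * x ^ (2 ^ k) + x ^ (2 ^ (k + 1))\<bar> \<le> \<bar>t\<bar> * \<bar>x\<bar> ^ (2 ^ k) + \<bar>x\<bar> ^ (2 ^ (k + 1))"
      using abs_triangle_ineq[of "t * x ^ (2 ^ k)" "x ^ (2 ^ (k + 1))"] by (simp add: abs_mult power_abs)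
    ultimately show ?thesis
      by (simp add: algebra_simps)
  qed
  have "summable (\<lambda>k. (\<bar>t\<bar> + 1) * \<bar>x\<bar> ^ k)"
    using x by (intro summable_mult summable_geometric) simp
  then show "summable (\<lambda>k. norm ((1 + t * x ^ (2 ^ k) + x ^ (2 ^ (k + 1))) - 1))"
    by (rule summable_comparison_test') (use bound in simp)
qed

text \<open>Letting \<open>N \<rightarrow> \<infinity>\<close> in the iterated functional equation identifies \<open>R(x)\<close> with the product.\<close>
lemma stern_tail_sum_eq_prodinf:
  assumes x: "\<bar>x\<bar> < 1"
  shows "stern_tail_sum t x = (\<Prod>k. 1 + t * x ^ (2 ^ k) + x ^ (2 ^ (k + 1)))"
proof -
  define f where "f k = 1 + t * x ^ (2 ^ k) + x ^ (2 ^ (k + 1))" for k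
  have "(\<lambda>N. \<Prod>k<N. f k) \<longlonglongrightarrow> prodinf f"
    using convergent_prod_LIMSEQ[OF stern_product_convergent[OF x, of t, folded f_def]]
    by (simp only: LIMSEQ_lessThan_iff_atMost)
  then have "(\<lambda>N. (\<Prod>k<N. f k) * stern_tail_sum t (x ^ (2 ^ N))) \<longlonglongrightarrow> prodinf f * 1"
    using stern_tail_sum_at_iterated_squares[OF x] by (rule tendsto_mult)
  moreover have "(\<Prod>k<N. f k) * stern_tail_sum t (x ^ (2 ^ N)) = stern_tail_sum t x" for N
    unfolding f_def by (rule stern_tail_sum_iterate[OF x, symmetric])
  ultimately have "(\<lambda>N. stern_tail_sum t x) \<longlonglongrightarrow> prodinf f"
    by simp
  then show ?thesis
    unfolding f_def LIMSEQ_const_iff .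
qed

theorem theorem3p1:
  shows "((\<lambda>N. fps_X * (\<Prod>k<N. 1 + fps_const [:0, 1:] * fps_X ^ (2 ^ k) + fps_X ^ (2 ^ (k + 1))))
            \<longlonglongrightarrow> Abs_fps (\<lambda>n. stern_poly n))
       \<and> (\<forall>(t::real) (x::real). \<bar>x\<bar> < 1 \<longrightarrow>
           summable (\<lambda>n. poly (map_poly of_int (stern_poly n)) t * x ^ n)
         \<and> convergent_prod (\<lambda>k. 1 + t * x ^ (2 ^ k) + x ^ (2 ^ (k + 1)))
         \<and> (\<Sum>n. poly (map_poly of_int (stern_poly n)) t * x ^ n)
             = x * (\<Prod>k. 1 + t * x ^ (2 ^ k) + x ^ (2 ^ (k + 1))))"
proof (intro conjI allI impI)
  show "(\<lambda>N. fps_X * (\<Prod>k<N. 1 + fps_const [:0, 1:] * fps_X ^ (2 ^ k) + fps_X ^ (2 ^ (k + 1))))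
          \<longlonglongrightarrow> Abs_fps (\<lambda>n. stern_poly n)"
    using stern_partial_products_tendsto unfolding stern_factor_def .
  fix t x :: real
  assume x: "\<bar>x\<bar> < 1"
  have series: "(\<lambda>n. poly (map_poly of_int (stern_poly n)) t * x ^ n) sums (x * stern_tail_sum t x)"
    using stern_series_sums[OF x] unfolding stern_eval_def .
  then show "summable (\<lambda>n. poly (map_poly of_int (stern_poly n)) t * x ^ n)"
    by (rule sums_summable)
  show "convergent_prod (\<lambda>k. 1 + t * x ^ (2 ^ k) + x ^ (2 ^ (k + 1)))"
    using x by (rule stern_product_convergent)
  show "(\<Sum>n. poly (map_poly of_int (stern_poly n)) t * x ^ n)
          = x * (\<Prod>k. 1 + t * x ^ (2 ^ k) + x ^ (2 ^ (k + 1)))"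
    using sums_unique[OF series] stern_tail_sum_eq_prodinf[OF x] by simp
qed

end
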